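(* Let $K\ge1$ and let $\theta_1,\dots,\theta_K$ be unknown parameters with $\theta_i\in\Theta_i$. Data $\mathbf X=(X_1,\dots,X_K)$ are sampled from an unknown distribution (the $X_i$ may be arbitrarily dependent). For each $i\in[K]$ let $(E_i(\theta))_{\theta\in\Theta_i}$ be a family of e-values (for every $\theta\in\Theta_i$, $E_i(\theta)\ge0$ and $\mathbb{E}[E_i(\theta)]\le1$ whenever $\theta$ is the true value of $\theta_i$), and let $C_i(\alpha)=\{\theta\in\Theta_i: E_i(\theta)<1/\alpha\}$ be the associated marginal e-CIs. Let $\mathcal S$ be any selection rule and $S=\mathcal S(\mathbf X)\subseteq[K]$. The e-BY procedure at level $\delta\in(0,1)$ reports, for each $i\in S$, the interval $C_i(\alpha_i)$ with $\alpha_i=\delta|S|/K$. Then $$\mathrm{FCR}=\mathbb{E}\left[\frac{\sum_{i\in S}\mathbf 1\{\theta_i\notin C_i(\delta|S|/K)\}}{|S|\vee 1}\right]\le\delta .$$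
   Context: $[K]=\{1,\dots,K\}$. The false coverage rate (FCR) is the expectation of the false coverage proportion, the fraction of selected parameters not covered by their reported intervals. *)

theory Defs
  imports "HOL-Probability.Probability"
begin

definition e_CI :: "(nat \<Rightarrow> 'p set) \<Rightarrow> (nat \<Rightarrow> 'p \<Rightarrow> 'w \<Rightarrow> real) \<Rightarrow> nat \<Rightarrow> real \<Rightarrow> 'w \<Rightarrow> 'p set" where
  "e_CI \<Theta> E i \<alpha> \<omega> = {t \<in> \<Theta> i. E i t \<omega> < 1 / \<alpha>}"

definition eBY_FCP :: "(nat \<Rightarrow> 'p set) \<Rightarrow> (nat \<Rightarrow> 'p \<Rightarrow> 'w \<Rightarrow> real) \<Rightarrow> (nat \<Rightarrow> 'p)
    \<Rightarrow> ('w \<Rightarrow> nat set) \<Rightarrow> nat \<Rightarrow> real \<Rightarrow> 'w \<Rightarrow> real" where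
  "eBY_FCP \<Theta> E \<theta> S K \<delta> \<omega> =
     (\<Sum>i\<in>S \<omega>. if \<theta> i \<notin> e_CI \<Theta> E i (\<delta> * real (card (S \<omega>)) / real K) \<omega> then 1 else 0)
     / max (real (card (S \<omega>))) 1"

end

theory Submission
  imports Defs
begin

text \<open>If the reported interval misses \<open>\<theta>\<^sub>i\<close> then \<open>E\<^sub>i(\<theta>\<^sub>i) \<ge> 1/\<alpha>\<^sub>i\<close>, a Markov-type
  bound on the miscoverage indicator. With \<open>\<alpha>\<^sub>i = \<delta>|S|/K\<close> the factor \<open>|S|\<close> cancels against the
  denominator of the false coverage proportion, so the FCP is bounded by \<open>\<delta>/K \<Sum>\<^sub>i E\<^sub>i(\<theta>\<^sub>i)\<close>
  regardless of the selection rule; integrating and using \<open>\<integral> E\<^sub>i(\<theta>\<^sub>i) \<le> 1\<close> gives \<open>\<delta>\<close>.\<close>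

lemma e_CI_miscoverage_le:
  assumes "t \<in> \<Theta> i" and "0 \<le> E i t \<omega>" and "0 < \<alpha>"
  shows "(if t \<notin> e_CI \<Theta> E i \<alpha> \<omega> then 1 else 0) \<le> \<alpha> * E i t \<omega>"
proof (cases "t \<in> e_CI \<Theta> E i \<alpha> \<omega>")
  case False
  then have "1 / \<alpha> \<le> E i t \<omega>"
    using assms(1) by (auto simp: e_CI_def)
  then show ?thesis
    using assms(3) by (simp add: field_simps)
qed (use assms in simp)

lemma eBY_FCP_le_sum_e_values:
  fixes \<delta> :: real
  assumes "0 < \<delta>"
    and "\<And>i. i \<in> {1..K} \<Longrightarrow> \<theta> i \<in> \<Theta> i"
    and "\<And>i. i \<in> {1..K} \<Longrightarrow> 0 \<le> E i (\<theta> i) \<omega>"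
    and "S \<omega> \<subseteq> {1..K}"
  shows "eBY_FCP \<Theta> E \<theta> S K \<delta> \<omega> \<le> \<delta> / real K * (\<Sum>i\<in>{1..K}. E i (\<theta> i) \<omega>)"
proof (cases "S \<omega> = {}")
  case True
  have "0 \<le> (\<Sum>i\<in>{1..K}. E i (\<theta> i) \<omega>)"
    using assms(3) by (intro sum_nonneg) auto
  with True show ?thesis
    using assms(1) by (simp add: eBY_FCP_def)
next
  case False
  define n where "n = real (card (S \<omega>))"
  define \<alpha> where "\<alpha> = \<delta> * n / real K"
  have "finite (S \<omega>)"
    using assms(4) finite_subset by blast
  then have "n \<ge> 1"
    using False by (simp add: n_def Suc_le_eq card_gt_0_iff)
  moreover have "K \<ge> 1"
    using False assms(4) by auto
  ultimately have "0 < \<alpha>"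
    using assms(1) by (simp add: \<alpha>_def)
  have "eBY_FCP \<Theta> E \<theta> S K \<delta> \<omega>
      = (\<Sum>i\<in>S \<omega>. if \<theta> i \<notin> e_CI \<Theta> E i \<alpha> \<omega> then 1 else 0) / n"
    using \<open>n \<ge> 1\<close> by (simp add: eBY_FCP_def n_def \<alpha>_def)
  also have "\<dots> \<le> (\<Sum>i\<in>S \<omega>. \<alpha> * E i (\<theta> i) \<omega>) / n"
    using assms(2,3,4) \<open>0 < \<alpha>\<close> \<open>n \<ge> 1\<close>
    by (intro divide_right_mono sum_mono e_CI_miscoverage_le) auto
  also have "\<dots> = \<delta> / real K * (\<Sum>i\<in>S \<omega>. E i (\<theta> i) \<omega>)"
    using \<open>n \<ge> 1\<close> by (simp add: \<alpha>_def sum_distrib_left sum_divide_distrib)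
  also have "\<dots> \<le> \<delta> / real K * (\<Sum>i\<in>{1..K}. E i (\<theta> i) \<omega>)"
    using assms(1,3,4) by (intro mult_left_mono sum_mono2) auto
  finally show ?thesis .
qed

lemma e_value_integrable:
  fixes X :: "'a \<Rightarrow> real"
  assumes "X \<in> borel_measurable M"
    and "\<And>\<omega>. \<omega> \<in> space M \<Longrightarrow> 0 \<le> X \<omega>"
    and "(\<integral>\<^sup>+ \<omega>. ennreal (X \<omega>) \<partial>M) \<le> 1"
  shows "integrable M X"
  using assms by (intro integrableI_nonneg) (auto simp: le_less_trans)

theorem theorem2:
  fixes M :: "'w measure"
    and K :: nat
    and \<Theta> :: "nat \<Rightarrow> 'p set"
    and \<theta> :: "nat \<Rightarrow> 'p"
    and E :: "nat \<Rightarrow> 'p \<Rightarrow> 'w \<Rightarrow> real"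
    and S :: "'w \<Rightarrow> nat set"
    and \<delta> :: real
  assumes "prob_space M"
    and "K \<ge> 1"
    and "\<And>i. i \<in> {1..K} \<Longrightarrow> \<theta> i \<in> \<Theta> i"
    and "\<And>i t \<omega>. i \<in> {1..K} \<Longrightarrow> t \<in> \<Theta> i \<Longrightarrow> \<omega> \<in> space M \<Longrightarrow> E i t \<omega> \<ge> 0"
    and "\<And>i. i \<in> {1..K} \<Longrightarrow> E i (\<theta> i) \<in> borel_measurable M"
    and "\<And>i. i \<in> {1..K} \<Longrightarrow> (\<integral>\<^sup>+ \<omega>. ennreal (E i (\<theta> i) \<omega>) \<partial>M) \<le> 1"
    and "\<And>\<omega>. \<omega> \<in> space M \<Longrightarrow> S \<omega> \<subseteq> {1..K}"
    and "\<And>A. {\<omega> \<in> space M. S \<omega> = A} \<in> sets M"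
    and "0 < \<delta>" and "\<delta> < 1"
  shows "(\<integral>\<omega>. eBY_FCP \<Theta> E \<theta> S K \<delta> \<omega> \<partial>M) \<le> \<delta>"
proof -
  have E_nonneg: "\<And>i \<omega>. i \<in> {1..K} \<Longrightarrow> \<omega> \<in> space M \<Longrightarrow> 0 \<le> E i (\<theta> i) \<omega>"
    using assms(3,4) by blast
  have E_integrable: "\<And>i. i \<in> {1..K} \<Longrightarrow> integrable M (E i (\<theta> i))"
    using assms(5,6) E_nonneg by (intro e_value_integrable) auto
  have bound_integrable: "integrable M (\<lambda>\<omega>. \<delta> / real K * (\<Sum>i\<in>{1..K}. E i (\<theta> i) \<omega>))"
    using E_integrable
    by (intro Bochner_Integration.integrable_mult_right Bochner_Integration.integrable_sum) auto
  have "(\<integral>\<omega>. eBY_FCP \<Theta> E \<theta> S K \<delta> \<omega> \<partial>M)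
      \<le> (\<integral>\<omega>. \<delta> / real K * (\<Sum>i\<in>{1..K}. E i (\<theta> i) \<omega>) \<partial>M)"
    using bound_integrable assms(3,7,9) E_nonneg
    by (intro integral_mono' eBY_FCP_le_sum_e_values mult_nonneg_nonneg sum_nonneg) auto
  also have "\<dots> = \<delta> / real K * (\<Sum>i\<in>{1..K}. \<integral>\<omega>. E i (\<theta> i) \<omega> \<partial>M)"
    using E_integrable by simp
  also have "\<dots> \<le> \<delta> / real K * (\<Sum>i\<in>{1..K}. 1)"
    using assms(6,9) by (intro mult_left_mono sum_mono integral_real_bounded) auto
  also have "\<dots> = \<delta>"
    using assms(2) by simp
  finally show ?thesis .
qed

end
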